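(* Let $n\geq 2$, $\lambda=\frac{n-1}{2}$, and let $$\mathcal K(t)=\sum_{l=1}^\infty\frac{-1}{l(n+l-1)}\cdot\frac{\lambda+l}{\lambda}\,C_l^\lambda(t).$$ For $r\in[0,1)$ and $\vartheta\in[0,\pi]$ let $$p_r(\cos\vartheta)=\frac{1}{\Sigma_n}\cdot\frac{1-r^2}{(1-2r\cos\vartheta+r^2)^{(n+1)/2}}=\frac{1}{\Sigma_n}\sum_{l=0}^\infty r^l\,\frac{\lambda+l}{\lambda}\,C_l^\lambda(\cos\vartheta),$$ where $\Sigma_n=\frac{2\pi^{(n+1)/2}}{\Gamma((n+1)/2)}$. Then, for $\vartheta\in(0,\pi]$, $$\mathcal K(\cos\vartheta)=-\lim_{\epsilon\to0}\int_0^{1-\epsilon}R^{n-2}\int_0^R\frac{\Sigma_n\, p_r(\cos\vartheta)-1}{r}\,dr\,dR.$$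
   Context: $C_l^\lambda$ denotes the Gegenbauer polynomial of degree $l$ and order $\lambda$. $\Sigma_n$ is the surface area of the unit sphere $\mathcal S^n\subseteq\mathbb R^{n+1}$, and $p_r$ is the Poisson kernel on $\mathcal S^n$.
   Formalization: $\mathcal K(t)$ is the limit as s tends to 1 from below of the series with its l-th term multiplied by s to the power l, not the ordinary sum, and this limit is also asserted to exist at $\cos\vartheta$. Apart from conventions, each condition added here is assumed in the paper as well or is needed for the statement above to hold. *)

theory Defs
  imports "HOL-Analysis.Analysis"
begin

definition gegenbauer :: "nat \<Rightarrow> real \<Rightarrow> real \<Rightarrow> real" where
  "gegenbauer l lam t =
     (\<Sum>k = 0..l div 2. (-1) ^ k * pochhammer lam (l - k)
         / (fact k * fact (l - 2 * k)) * (2 * t) ^ (l - 2 * k))"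

definition sphere_area :: "nat \<Rightarrow> real" where
  "sphere_area n = 2 * pi powr ((real n + 1) / 2) / Gamma ((real n + 1) / 2)"

definition poisson_kernel :: "nat \<Rightarrow> real \<Rightarrow> real \<Rightarrow> real" where
  "poisson_kernel n r t =
     (1 / sphere_area n) * (1 - r\<^sup>2) / (1 - 2 * r * t + r\<^sup>2) powr ((real n + 1) / 2)"

definition K_term :: "nat \<Rightarrow> nat \<Rightarrow> real \<Rightarrow> real" where
  "K_term n l t = (let lam = (real n - 1) / 2 in
      - 1 / (real l * (real n + real l - 1)) * ((lam + real l) / lam) * gegenbauer l lam t)"

text \<open>The series sum_{l>=1} K_term, taken in the Abel sense (the series does not
  converge in the ordinary sense for n >= 5).\<close>
definition K_kernel :: "nat \<Rightarrow> real \<Rightarrow> real" where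
  "K_kernel n t = Lim (at_left 1) (\<lambda>s. \<Sum>l. s ^ (Suc l) * K_term n (Suc l) t)"

end

theory Submission
  imports Defs "HOL-Complex_Analysis.Complex_Analysis"
begin

text \<open>Expanding (1 - 2 r t + r^2) powr (-lam) and its r-derivative in powers of r gives the
  Gegenbauer expansion of the Poisson kernel, hence (Sigma_n p_r(t) - 1) / r = sum_l a_l r^l with
  a_l = (lam + l + 1) / lam * C_(l+1)^lam(t). Integrating termwise in r over [0, R] and then against
  R^(n-2) over [0, s] turns a_l r^l into a_l s^(l+n) / ((l + 1) (l + n)), which is -s^(n-1) times
  the term of index l + 1 in the Abel sum of K at s. So that Abel sum equals -Phi(s) / s^(n-1),
  where Phi(s) is the double integral. For theta > 0 the integrand extends continuously to [0, 1],
  so Phi is continuous up to s = 1 and both limits equal -Phi(1).\<close>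

lemma fps_nth_X_minus_const_power:
  fixes c :: "'a::comm_ring_1"
  shows "fps_nth ((fps_X - fps_const c) ^ i) j = (if j \<le> i then of_nat (i choose j) * (- c) ^ (i - j) else 0)"
proof -
  have "(fps_X - fps_const c) ^ i = (\<Sum>k\<le>i. of_nat (i choose k) * fps_X ^ k * fps_const (- c) ^ (i - k))"
    using binomial_ring[of fps_X "fps_const (- c)" i] by (simp del: fps_const_neg add: fps_const_neg[symmetric])
  also have "\<dots> = (\<Sum>k\<le>i. fps_const (of_nat (i choose k) * (- c) ^ (i - k)) * fps_X ^ k)"
    by (simp add: fps_const_power fps_of_nat[symmetric] fps_const_mult[symmetric] mult_ac
        del: fps_const_mult)
  finally show ?thesis
    by (simp add: fps_sum_nth fps_X_power_nth if_distrib sum.delta cong: if_cong)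
qed

lemma gegenbauer_summand_complex:
  fixes lam t :: real
  assumes "2 * k \<le> l"
  shows "(- complex_of_real lam gchoose (l - k)) * (of_nat ((l - k) choose k) * (- of_real (2 * t)) ^ (l - k - k))
     = of_real ((-1) ^ k * pochhammer lam (l - k) / (fact k * fact (l - 2 * k)) * (2 * t) ^ (l - 2 * k))"
proof -
  have diff: "l - k - k = l - 2 * k" by simp
  have gchoose: "(- complex_of_real lam gchoose (l - k)) = (-1) ^ (l - k) * of_real (pochhammer lam (l - k)) / fact (l - k)"
    by (simp add: gbinomial_pochhammer pochhammer_of_real)
  have choose: "(of_nat ((l - k) choose k) :: complex) = fact (l - k) / (fact k * fact (l - 2 * k))"
    using binomial_fact[of k "l - k", where 'a=complex] assms unfolding diff by simp
  have power: "(- complex_of_real (2 * t)) ^ (l - 2 * k) = (-1) ^ (l - 2 * k) * of_real ((2 * t) ^ (l - 2 * k))"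
    by (simp add: power_minus')
  have sign: "((-1)::complex) ^ (l - k) * (-1) ^ (l - 2 * k) = (-1) ^ k"
  proof -
    have "(l - k) + (l - 2 * k) = k + 2 * (l - 2 * k)" using assms by simp
    then have "((-1)::complex) ^ (l - k) * (-1) ^ (l - 2 * k) = (-1) ^ k * ((-1) ^ 2) ^ (l - 2 * k)"
      by (metis power_add power_mult)
    then show ?thesis by simp
  qed
  have "(fact (l - k) :: complex) \<noteq> 0" by simp
  then have "(- complex_of_real lam gchoose (l - k)) * (of_nat ((l - k) choose k) * (- of_real (2 * t)) ^ (l - k - k))
     = ((-1) ^ (l - k) * (-1) ^ (l - 2 * k)) * of_real (pochhammer lam (l - k)) / (fact k * fact (l - 2 * k))
       * of_real ((2 * t) ^ (l - 2 * k))"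
    unfolding diff gchoose choose power by (simp add: field_simps)
  then show ?thesis unfolding sign by simp
qed

lemma fps_nth_gegenbauer_generating:
  fixes lam t :: real
  shows "fps_nth (fps_binomial (- complex_of_real lam) oo (fps_X\<^sup>2 - fps_const (of_real (2 * t)) * fps_X)) l
    = of_real (gegenbauer l lam t)"
proof -
  define c where "c = complex_of_real (2 * t)"
  define G where "G i = (- complex_of_real lam gchoose i)" for i
  have factor: "(fps_X\<^sup>2 - fps_const c * fps_X) ^ i = fps_X ^ i * (fps_X - fps_const c) ^ i" for i
    by (simp add: power2_eq_square algebra_simps flip: power_mult_distrib)
  have "fps_nth (fps_binomial (- complex_of_real lam) oo (fps_X\<^sup>2 - fps_const c * fps_X)) l
      = (\<Sum>i=0..l. G i * (if l - i \<le> i then of_nat (i choose (l - i)) * (- c) ^ (i - (l - i)) else 0))"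
    unfolding fps_compose_nth factor G_def
    by (intro sum.cong refl) (auto simp: fps_X_power_mult_nth fps_nth_X_minus_const_power)
  also have "\<dots> = (\<Sum>k=0..l. G (l - k) * (if k \<le> l - k then of_nat ((l - k) choose k) * (- c) ^ (l - k - k) else 0))"
    by (subst sum.atLeastAtMost_rev) (intro sum.cong refl, auto simp: Suc_diff_le)
  also have "\<dots> = (\<Sum>k=0..l div 2. G (l - k) * (of_nat ((l - k) choose k) * (- c) ^ (l - k - k)))"
    by (rule sum.mono_neutral_cong_right) auto
  also have "\<dots> = (\<Sum>k=0..l div 2. of_real ((-1) ^ k * pochhammer lam (l - k)
      / (fact k * fact (l - 2 * k)) * (2 * t) ^ (l - 2 * k)))"
    unfolding G_def c_def by (intro sum.cong refl gegenbauer_summand_complex) auto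
  also have "\<dots> = of_real (gegenbauer l lam t)"
    unfolding gegenbauer_def by simp
  finally show ?thesis unfolding c_def .
qed

lemma mult_notin_nonpos_Reals_if_Re_pos:
  fixes u v :: complex
  assumes "Re u > 0" "Re v > 0"
  shows "u * v \<notin> \<real>\<^sub>\<le>\<^sub>0"
proof
  assume "u * v \<in> \<real>\<^sub>\<le>\<^sub>0"
  then have "Im (u * v) = 0" "Re (u * v) \<le> 0" by (auto simp: complex_nonpos_Reals_iff)
  moreover have "Re u * Re (u * v) + Im u * Im (u * v) = ((Re u)\<^sup>2 + (Im u)\<^sup>2) * Re v"
    by (simp add: algebra_simps power2_eq_square)
  moreover have "((Re u)\<^sup>2 + (Im u)\<^sup>2) * Re v > 0" using assms by (simp add: add_pos_nonneg)
  ultimately have "Re u * Re (u * v) > 0" by simp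
  with assms(1) \<open>Re (u * v) \<le> 0\<close> show False by (simp add: zero_less_mult_iff)
qed

lemma gegenbauer_base_notin_nonpos_Reals:
  fixes z :: complex and t :: real
  assumes "norm z < 1" "\<bar>t\<bar> \<le> 1"
  shows "1 + (z\<^sup>2 - of_real (2 * t) * z) \<notin> \<real>\<^sub>\<le>\<^sub>0"
proof -
  define \<theta> where "\<theta> = arccos t"
  have sum: "cis \<theta> + cis (- \<theta>) = of_real (2 * t)"
    using assms(2) by (simp add: complex_eq_iff \<theta>_def cos_arccos_abs)
  have "(1 - z * cis \<theta>) * (1 - z * cis (- \<theta>)) = 1 - z * (cis \<theta> + cis (- \<theta>)) + z\<^sup>2 * (cis \<theta> * cis (- \<theta>))"
    by (simp add: algebra_simps power2_eq_square)
  then have factor: "1 + (z\<^sup>2 - of_real (2 * t) * z) = (1 - z * cis \<theta>) * (1 - z * cis (- \<theta>))"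
    by (simp add: sum cis_mult algebra_simps)
  have "Re (1 - z * cis \<phi>) > 0" for \<phi>
    using complex_Re_le_cmod[of "z * cis \<phi>"] assms(1) by (simp add: norm_mult)
  then show ?thesis
    unfolding factor by (intro mult_notin_nonpos_Reals_if_Re_pos)
qed

lemma gegenbauer_base_pos:
  fixes r t :: real
  assumes "\<bar>r\<bar> < 1" "\<bar>t\<bar> \<le> 1"
  shows "1 - 2 * r * t + r\<^sup>2 > 0"
proof -
  have "r * t \<le> \<bar>r\<bar>"
    using mult_left_le[of "\<bar>t\<bar>" "\<bar>r\<bar>"] abs_ge_self[of "r * t"] assms(2) by (simp add: abs_mult)
  moreover have "0 < (1 - \<bar>r\<bar>)\<^sup>2" using assms(1) by simp
  moreover have "(1 - \<bar>r\<bar>)\<^sup>2 = 1 - 2 * \<bar>r\<bar> + r\<^sup>2" by (simp add: power2_eq_square algebra_simps)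
  ultimately show ?thesis by linarith
qed

lemma gegenbauer_generating_function:
  fixes lam t r :: real
  assumes "\<bar>t\<bar> \<le> 1" "\<bar>r\<bar> < 1"
  shows "(\<lambda>l. gegenbauer l lam t * r ^ l) sums (1 - 2 * r * t + r\<^sup>2) powr (- lam)"
proof -
  define g where "g = (\<lambda>z::complex. (1 + (z\<^sup>2 - of_real (2 * t) * z)) powr (- of_real lam))"
  define F where "F = fps_binomial (- complex_of_real lam) oo (fps_X\<^sup>2 - fps_const (of_real (2 * t)) * fps_X)"
  have "((\<lambda>x. (1 + x) powr (- of_real lam)) \<circ> (\<lambda>z. z\<^sup>2 - of_real (2 * t) * z)) has_fps_expansion F"
    unfolding F_def
    by (intro has_fps_expansion_compose has_fps_expansion_binomial_complex fps_expansion_intros) auto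
  then have "g has_fps_expansion F" unfolding g_def o_def .
  moreover have "g holomorphic_on eball 0 1"
    unfolding g_def
    by (intro holomorphic_intros) (use gegenbauer_base_notin_nonpos_Reals assms(1) in auto)
  ultimately have "(\<lambda>l. fps_nth F l * complex_of_real r ^ l) sums g (of_real r)"
    by (rule has_fps_expansion_imp_sums_complex) (use assms(2) in simp)
  moreover have "fps_nth F l * complex_of_real r ^ l = of_real (gegenbauer l lam t * r ^ l)" for l
    unfolding F_def fps_nth_gegenbauer_generating by simp
  moreover have "g (of_real r) = of_real ((1 - 2 * r * t + r\<^sup>2) powr (- lam))"
    using gegenbauer_base_pos[OF assms(2,1)] unfolding g_def
    by (subst powr_of_real[symmetric]) (auto simp: algebra_simps)
  ultimately have "(\<lambda>l. complex_of_real (gegenbauer l lam t * r ^ l))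
      sums complex_of_real ((1 - 2 * r * t + r\<^sup>2) powr (- lam))"
    by (simp only:)
  then show ?thesis by (simp only: sums_of_real_iff)
qed

lemma powser_of_nat_mult_sums:
  fixes c :: "nat \<Rightarrow> 'a::{banach,real_normed_field}"
  assumes "\<And>z. norm z < K \<Longrightarrow> (\<lambda>l. c l * z ^ l) sums f z"
    and "(f has_field_derivative f') (at z)" and "norm z < K"
  shows "(\<lambda>l. of_nat l * c l * z ^ l) sums (z * f')"
proof -
  have "(\<lambda>l. z * (diffs c l * z ^ l)) sums (z * f')"
    using termdiffs_sums_strong[OF assms] by (rule sums_mult)
  moreover have "z * (diffs c l * z ^ l) = of_nat (Suc l) * c (Suc l) * z ^ Suc l" for l
    by (simp add: diffs_def mult_ac)
  ultimately show ?thesis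
    using sums_Suc_iff[of "\<lambda>l. of_nat l * c l * z ^ l"] by simp
qed

lemma gegenbauer_weighted_generating_function:
  fixes lam t r :: real
  assumes "lam > 0" "\<bar>t\<bar> \<le> 1" "\<bar>r\<bar> < 1"
  shows "(\<lambda>l. (lam + l) / lam * gegenbauer l lam t * r ^ l) sums
           ((1 - r\<^sup>2) / (1 - 2 * r * t + r\<^sup>2) powr (lam + 1))"
proof -
  define Q where "Q z = 1 - 2 * z * t + z\<^sup>2" for z :: real
  have Q: "Q r > 0" unfolding Q_def by (rule gegenbauer_base_pos[OF assms(3,2)])
  have gen: "(\<lambda>l. gegenbauer l lam t * z ^ l) sums Q z powr (- lam)" if "norm z < 1" for z
    unfolding Q_def using gegenbauer_generating_function[OF assms(2)] that by simp
  have "((\<lambda>z. Q z powr (- lam)) has_real_derivative (- lam) * Q r powr (- lam - 1) * (2 * r - 2 * t)) (at r)"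
    using Q unfolding Q_def by (auto intro!: derivative_eq_intros simp: algebra_simps)
  from powser_of_nat_mult_sums[where K = 1, OF gen this] assms(3)
  have "(\<lambda>l. 1 / lam * (real l * gegenbauer l lam t * r ^ l)) sums
          (1 / lam * (r * ((- lam) * Q r powr (- lam - 1) * (2 * r - 2 * t))))"
    by (intro sums_mult) simp
  from sums_add[OF gen[of r] this] assms(3)
  have "(\<lambda>l. gegenbauer l lam t * r ^ l + 1 / lam * (real l * gegenbauer l lam t * r ^ l)) sums
          (Q r powr (- lam) + 1 / lam * (r * ((- lam) * Q r powr (- lam - 1) * (2 * r - 2 * t))))"
    by simp
  moreover have "gegenbauer l lam t * r ^ l + 1 / lam * (real l * gegenbauer l lam t * r ^ l)
      = (lam + l) / lam * gegenbauer l lam t * r ^ l" for l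
    using assms(1) by (simp add: field_simps)
  moreover have "Q r powr (- lam) + 1 / lam * (r * ((- lam) * Q r powr (- lam - 1) * (2 * r - 2 * t)))
      = (1 - r\<^sup>2) / Q r powr (lam + 1)"
  proof -
    define P where "P = Q r powr (- lam - 1)"
    have QP: "Q r powr (- lam) = Q r * P"
      unfolding P_def using powr_add[of "Q r" 1 "- lam - 1"] Q by simp
    have "Q r powr (- lam) + 1 / lam * (r * ((- lam) * P * (2 * r - 2 * t))) = (1 - r\<^sup>2) * P"
      unfolding QP using assms(1) by (simp add: Q_def field_simps power2_eq_square)
    also have "\<dots> = (1 - r\<^sup>2) / Q r powr (lam + 1)"
      using powr_minus_divide[of "Q r" "lam + 1"] by (simp add: P_def)
    finally show ?thesis unfolding P_def .
  qed
  ultimately show ?thesis by (simp add: Q_def)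
qed

lemma sphere_area_pos: "sphere_area n > 0"
  unfolding sphere_area_def by (intro divide_pos_pos mult_pos_pos Gamma_real_pos) auto

lemma poisson_kernel_gegenbauer_series:
  fixes lam t r :: real
  assumes "lam = (real n - 1) / 2" "n \<ge> 2" "\<bar>t\<bar> \<le> 1" "\<bar>r\<bar> < 1"
  shows "(\<lambda>l. (lam + l) / lam * gegenbauer l lam t * r ^ l) sums (sphere_area n * poisson_kernel n r t)"
proof -
  have exponent: "(real n + 1) / 2 = lam + 1" using assms(1) by simp
  have "sphere_area n * poisson_kernel n r t = (1 - r\<^sup>2) / (1 - 2 * r * t + r\<^sup>2) powr (lam + 1)"
    unfolding poisson_kernel_def exponent using sphere_area_pos[of n] by simp
  moreover have "lam > 0" using assms(1,2) by simp
  ultimately show ?thesis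
    using gegenbauer_weighted_generating_function[of lam t r] assms(3,4) by simp
qed

lemma powser_summable_divide:
  fixes c d :: "nat \<Rightarrow> real"
  assumes "\<And>z. \<bar>z\<bar> < 1 \<Longrightarrow> summable (\<lambda>l. c l * z ^ l)" and "\<And>l. d l \<ge> 1" and "\<bar>z\<bar> < 1"
  shows "summable (\<lambda>l. c l / d l * z ^ l)"
proof (rule summable_comparison_test')
  have "summable (\<lambda>l. c l * ((1 + \<bar>z\<bar>) / 2) ^ l)" using assms(1,3) by simp
  then show "summable (\<lambda>l. norm (c l * z ^ l))"
    by (rule powser_insidea) (use assms(3) in simp)
  show "norm (c l / d l * z ^ l) \<le> norm (c l * z ^ l)" for l
  proof -
    have "norm (c l / d l * z ^ l) = norm (c l * z ^ l) / d l"
      using assms(2)[of l] by (simp add: abs_mult)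
    also have "\<dots> \<le> norm (c l * z ^ l)"
      using assms(2)[of l] by (simp add: divide_le_eq mult_le_cancel_left1)
    finally show ?thesis .
  qed
qed

lemma powser_mult_power_antiderivative:
  fixes c :: "nat \<Rightarrow> real"
  assumes "\<And>z. \<bar>z\<bar> < 1 \<Longrightarrow> summable (\<lambda>l. c l * z ^ l)" and "\<bar>x\<bar> < 1"
  shows "((\<lambda>x. x ^ (k + 1) * (\<Sum>l. c l / real (l + k + 1) * x ^ l)) has_real_derivative
           x ^ k * (\<Sum>l. c l * x ^ l)) (at x)"
proof -
  define h where "h l = c l / real (l + k + 1)" for l
  define H where "H x = (\<Sum>l. h l * x ^ l)" for x
  define H' where "H' = (\<Sum>l. diffs h l * x ^ l)"
  have h_sums: "(\<lambda>l. h l * z ^ l) sums H z" if "norm z < 1" for z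
    unfolding h_def H_def by (rule summable_sums, rule powser_summable_divide[OF assms(1)]) (use that in auto)
  have H_deriv: "(H has_real_derivative H') (at x)"
    unfolding H_def H'_def by (rule termdiffs_strong'[of 1]) (use h_sums assms(2) in \<open>auto simp: sums_iff\<close>)
  have "(\<lambda>l. real l * h l * x ^ l) sums (x * H')"
    using assms(2) by (intro powser_of_nat_mult_sums[where K = 1, OF h_sums H_deriv]) auto
  from sums_add[OF this sums_mult[OF h_sums, of x "real (k + 1)"]] assms(2)
  have "(\<lambda>l. real l * h l * x ^ l + real (k + 1) * (h l * x ^ l)) sums (x * H' + real (k + 1) * H x)"
    by simp
  moreover have "real l * h l * x ^ l + real (k + 1) * (h l * x ^ l) = c l * x ^ l" for l
  proof -
    have "real l * h l * x ^ l + real (k + 1) * (h l * x ^ l) = real (l + k + 1) * h l * x ^ l"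
      by (simp add: algebra_simps)
    also have "real (l + k + 1) * h l = c l" by (simp add: h_def)
    finally show ?thesis .
  qed
  ultimately have "(\<lambda>l. c l * x ^ l) sums (x * H' + real (k + 1) * H x)"
    by simp
  then have deriv_eq: "x ^ k * (\<Sum>l. c l * x ^ l) = real (k + 1) * x ^ k * H x + H' * x ^ (k + 1)"
    by (simp add: sums_iff algebra_simps)
  have "((\<lambda>x. x ^ (k + 1)) has_real_derivative real (k + 1) * x ^ k) (at x)"
    using DERIV_pow[of "k + 1" x] by simp
  from DERIV_mult[OF this H_deriv] show ?thesis
    unfolding deriv_eq H_def h_def .
qed

lemma powser_mult_power_has_integral:
  fixes c :: "nat \<Rightarrow> real"
  assumes "\<And>z. \<bar>z\<bar> < 1 \<Longrightarrow> summable (\<lambda>l. c l * z ^ l)" and "0 \<le> s" "s < 1"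
  shows "((\<lambda>x. x ^ k * (\<Sum>l. c l * x ^ l)) has_integral
           s ^ (k + 1) * (\<Sum>l. c l / real (l + k + 1) * s ^ l)) {0..s}"
proof -
  have "((\<lambda>x. x ^ k * (\<Sum>l. c l * x ^ l)) has_integral
           s ^ (k + 1) * (\<Sum>l. c l / real (l + k + 1) * s ^ l)
           - 0 ^ (k + 1) * (\<Sum>l. c l / real (l + k + 1) * 0 ^ l)) {0..s}"
    using assms(2,3)
    by (intro fundamental_theorem_of_calculus has_field_derivative_at_within
          [THEN has_real_derivative_iff_has_vector_derivative[THEN iffD1]]
          powser_mult_power_antiderivative[OF assms(1)]) auto
  then show ?thesis by simp
qed

lemma powser_iterated_integral:
  fixes c :: "nat \<Rightarrow> real" and f :: "real \<Rightarrow> real"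
  assumes "\<And>z. \<bar>z\<bar> < 1 \<Longrightarrow> summable (\<lambda>l. c l * z ^ l)"
    and "\<And>r. 0 < r \<Longrightarrow> r < 1 \<Longrightarrow> (\<Sum>l. c l * r ^ l) = f r" and "0 \<le> s" "s < 1"
  shows "integral {0..s} (\<lambda>R. R ^ k * integral {0..R} f)
           = s ^ (k + 2) * (\<Sum>l. c l / real (Suc l) / real (l + k + 2) * s ^ l)"
proof -
  define b where "b l = c l / real (Suc l)" for l
  have inner: "integral {0..R} f = R * (\<Sum>l. b l * R ^ l)" if "0 \<le> R" "R < 1" for R
  proof -
    have "((\<lambda>x. \<Sum>l. c l * x ^ l) has_integral R * (\<Sum>l. b l * R ^ l)) {0..R}"
      using powser_mult_power_has_integral[OF assms(1) that, of 0] by (simp add: b_def)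
    then have "(f has_integral R * (\<Sum>l. b l * R ^ l)) {0..R}"
      by (rule has_integral_spike_finite[of "{0}", rotated 2]) (use assms(2) that in auto)
    then show ?thesis by (rule integral_unique)
  qed
  have "summable (\<lambda>l. b l * z ^ l)" if "\<bar>z\<bar> < 1" for z
    unfolding b_def by (rule powser_summable_divide[OF assms(1)]) (use that in auto)
  from powser_mult_power_has_integral[OF this assms(3,4), of "k + 1"]
  have "((\<lambda>R. R ^ (k + 1) * (\<Sum>l. b l * R ^ l)) has_integral
          s ^ (k + 2) * (\<Sum>l. b l / real (l + k + 2) * s ^ l)) {0..s}"
    by (simp add: add.assoc)
  moreover have "integral {0..s} (\<lambda>R. R ^ k * integral {0..R} f)
      = integral {0..s} (\<lambda>R. R ^ (k + 1) * (\<Sum>l. b l * R ^ l))"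
    using assms(3,4) inner by (intro integral_cong) auto
  ultimately show ?thesis by (simp add: integral_unique b_def)
qed

lemma powser_integrable_on_unit_interval:
  fixes c :: "nat \<Rightarrow> real" and f :: "real \<Rightarrow> real"
  assumes "\<And>z. \<bar>z\<bar> < 1 \<Longrightarrow> summable (\<lambda>l. c l * z ^ l)"
    and "\<And>r. 0 < r \<Longrightarrow> r < 1 \<Longrightarrow> (\<Sum>l. c l * r ^ l) = f r" and "isCont f 1"
  shows "f integrable_on {0..1}"
proof -
  define g where "g r = (if r < 1 then \<Sum>l. c l * r ^ l else f r)" for r
  have "isCont g x" if "0 \<le> x" "x \<le> 1" for x
  proof (cases "x < 1")
    case True
    have "isCont (\<lambda>r. \<Sum>l. c l * r ^ l) x"
      by (rule DERIV_isCont, rule termdiffs_strong'[of 1]) (use assms(1) that True in auto)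
    moreover have "eventually (\<lambda>r. r \<in> {..<1}) (nhds x)"
      by (rule eventually_nhds_in_open) (use True in auto)
    then have "eventually (\<lambda>r. g r = (\<Sum>l. c l * r ^ l)) (nhds x)"
      by eventually_elim (simp add: g_def)
    ultimately show ?thesis by (subst isCont_cong) auto
  next
    case False
    have "eventually (\<lambda>r. r \<in> {0<..}) (nhds x)"
      by (rule eventually_nhds_in_open) (use False that in auto)
    then have "eventually (\<lambda>r. g r = f r) (nhds x)"
      by eventually_elim (simp add: g_def assms(2))
    then show ?thesis
      using assms(3) False that by (subst isCont_cong) auto
  qed
  then have "g integrable_on {0..1}"
    by (intro integrable_continuous_real continuous_at_imp_continuous_on) auto
  then show ?thesis
    by (rule integrable_spike_finite[of "{0}", rotated 2]) (auto simp: g_def assms(2))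
qed

definition poisson_quotient_coeff :: "nat \<Rightarrow> real \<Rightarrow> nat \<Rightarrow> real" where
  "poisson_quotient_coeff n t l =
     (let lam = (real n - 1) / 2 in (lam + Suc l) / lam * gegenbauer (Suc l) lam t)"

lemma poisson_quotient_sums:
  assumes "n \<ge> 2" "\<bar>t\<bar> \<le> 1" "\<bar>r\<bar> < 1" "r \<noteq> 0"
  shows "(\<lambda>l. poisson_quotient_coeff n t l * r ^ l) sums ((sphere_area n * poisson_kernel n r t - 1) / r)"
proof -
  define lam where "lam = (real n - 1) / 2"
  define c where "c l = (lam + l) / lam * gegenbauer l lam t" for l
  have "c 0 = 1" using assms(1) by (simp add: c_def lam_def gegenbauer_def)
  then have "(\<lambda>l. c (Suc l) * r ^ Suc l) sums (sphere_area n * poisson_kernel n r t - 1)"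
    using poisson_kernel_gegenbauer_series[OF lam_def assms(1-3)] sums_Suc_iff[of "\<lambda>l. c l * r ^ l"]
    by (simp add: c_def)
  then have "(\<lambda>l. c (Suc l) * r ^ Suc l / r) sums ((sphere_area n * poisson_kernel n r t - 1) / r)"
    by (rule sums_divide)
  moreover have "c (Suc l) * r ^ Suc l / r = poisson_quotient_coeff n t l * r ^ l" for l
    unfolding c_def poisson_quotient_coeff_def Let_def lam_def[symmetric] using assms(4) by simp
  ultimately show ?thesis by simp
qed

lemma poisson_quotient_powser:
  assumes "n \<ge> 2" "\<bar>t\<bar> \<le> 1"
  shows "\<And>z. \<bar>z\<bar> < 1 \<Longrightarrow> summable (\<lambda>l. poisson_quotient_coeff n t l * z ^ l)"
    and "\<And>r. 0 < r \<Longrightarrow> r < 1 \<Longrightarrow>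
           (\<Sum>l. poisson_quotient_coeff n t l * r ^ l) = (sphere_area n * poisson_kernel n r t - 1) / r"
proof -
  show "summable (\<lambda>l. poisson_quotient_coeff n t l * z ^ l)" if "\<bar>z\<bar> < 1" for z
    using poisson_quotient_sums[OF assms that] by (cases "z = 0") (auto simp: sums_summable)
  show "(\<Sum>l. poisson_quotient_coeff n t l * r ^ l) = (sphere_area n * poisson_kernel n r t - 1) / r"
    if "0 < r" "r < 1" for r
    using poisson_quotient_sums[OF assms, of r] that by (simp add: sums_iff)
qed

lemma K_term_Suc:
  assumes "n \<ge> 2"
  shows "K_term n (Suc l) t = - poisson_quotient_coeff n t l / (real (Suc l) * real (l + n))"
proof -
  have "real n + real (Suc l) - 1 = real (l + n)" by simp
  then show ?thesis by (simp add: K_term_def poisson_quotient_coeff_def Let_def)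
qed

definition poisson_double_integral :: "nat \<Rightarrow> real \<Rightarrow> real \<Rightarrow> real" where
  "poisson_double_integral n t s = integral {0..s}
     (\<lambda>R. R ^ (n - 2) * integral {0..R} (\<lambda>r. (sphere_area n * poisson_kernel n r t - 1) / r))"

lemma K_abel_sum_eq_poisson_double_integral:
  assumes "n \<ge> 2" "\<bar>t\<bar> \<le> 1" "0 < s" "s < 1"
  shows "(\<Sum>l. s ^ Suc l * K_term n (Suc l) t) = - poisson_double_integral n t s / s ^ (n - 1)"
proof -
  define b where "b l = poisson_quotient_coeff n t l / real (Suc l) / real (l + n)" for l
  have n: "n - 2 + 2 = n" "\<And>l. l + (n - 2) + 2 = l + n" using assms(1) by auto
  have "summable (\<lambda>l. poisson_quotient_coeff n t l / real (Suc l) * z ^ l)" if "\<bar>z\<bar> < 1" for z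
    by (rule powser_summable_divide[OF poisson_quotient_powser(1)[OF assms(1,2)]]) (use that in auto)
  then have "summable (\<lambda>l. b l * s ^ l)"
    unfolding b_def by (rule powser_summable_divide) (use assms in auto)
  moreover have "s ^ Suc l * K_term n (Suc l) t = - s * (b l * s ^ l)" for l
    using assms(1) by (simp add: K_term_Suc b_def)
  ultimately have "(\<lambda>l. s ^ Suc l * K_term n (Suc l) t) sums (- s * (\<Sum>l. b l * s ^ l))"
    by (simp only:) (intro sums_mult summable_sums)
  then have "(\<Sum>l. s ^ Suc l * K_term n (Suc l) t) = - s * (\<Sum>l. b l * s ^ l)"
    by (rule sums_unique[symmetric])
  moreover have "poisson_double_integral n t s = s ^ n * (\<Sum>l. b l * s ^ l)"
    using powser_iterated_integral[OF poisson_quotient_powser[OF assms(1,2)], of s "n - 2"] assms(3,4)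
    unfolding poisson_double_integral_def b_def n by simp
  moreover have "s ^ n = s * s ^ (n - 1)"
    using assms(1) by (simp add: power_eq_if)
  ultimately show ?thesis using assms(3) by simp
qed

lemma continuous_on_poisson_double_integral:
  assumes "n \<ge> 2" "\<bar>t\<bar> \<le> 1" "t < 1"
  shows "continuous_on {0..1} (poisson_double_integral n t)"
proof -
  have "isCont (\<lambda>r. (sphere_area n * poisson_kernel n r t - 1) / r) 1"
    unfolding poisson_kernel_def using assms(3) by (intro continuous_intros) auto
  then have "(\<lambda>r. (sphere_area n * poisson_kernel n r t - 1) / r) integrable_on {0..1}"
    by (intro powser_integrable_on_unit_interval[OF poisson_quotient_powser[OF assms(1,2)]])
  then have "continuous_on {0..1} (\<lambda>R. integral {0..R} (\<lambda>r. (sphere_area n * poisson_kernel n r t - 1) / r))"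
    by (rule indefinite_integral_continuous_1)
  then have "(\<lambda>R. R ^ (n - 2) * integral {0..R} (\<lambda>r. (sphere_area n * poisson_kernel n r t - 1) / r))
      integrable_on {0..1}"
    by (intro integrable_continuous_real continuous_intros)
  then show ?thesis
    unfolding poisson_double_integral_def[abs_def] by (rule indefinite_integral_continuous_1)
qed

lemma K_abel_sum_tendsto_poisson_double_integral:
  assumes "n \<ge> 2" "\<bar>t\<bar> \<le> 1" "t < 1"
  shows "((\<lambda>s. \<Sum>l. s ^ Suc l * K_term n (Suc l) t) \<longlongrightarrow> - poisson_double_integral n t 1) (at_left 1)"
proof -
  define \<Phi> where "\<Phi> = poisson_double_integral n t"
  have \<Phi>: "(\<Phi> \<longlongrightarrow> \<Phi> 1) (at_left 1)"
    unfolding \<Phi>_def by (rule continuous_on_Icc_at_leftD[OF continuous_on_poisson_double_integral[OF assms]]) simp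
  have "((\<lambda>s. - \<Phi> s / s ^ (n - 1)) \<longlongrightarrow> - \<Phi> 1 / 1 ^ (n - 1)) (at_left 1)"
    by (intro tendsto_intros \<Phi>) simp
  moreover have "eventually (\<lambda>s. s \<in> {0<..<1}) (at_left (1::real))"
    by (rule eventually_at_left_real) simp
  then have "eventually (\<lambda>s. - \<Phi> s / s ^ (n - 1) = (\<Sum>l. s ^ Suc l * K_term n (Suc l) t)) (at_left 1)"
  proof eventually_elim
    case (elim s)
    then show ?case
      using K_abel_sum_eq_poisson_double_integral[OF assms(1,2), of s] by (simp add: \<Phi>_def)
  qed
  ultimately show ?thesis
    unfolding \<Phi>_def by (auto intro: Lim_transform_eventually)
qed

theorem mainTheorem2:
  fixes n :: nat and \<theta> :: real
  assumes "n \<ge> 2" and "0 < \<theta>" and "\<theta> \<le> pi"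
  shows "((\<lambda>s. \<Sum>l. s ^ (Suc l) * K_term n (Suc l) (cos \<theta>)) \<longlongrightarrow> K_kernel n (cos \<theta>)) (at_left 1)
     \<and> ((\<lambda>\<epsilon>. - integral {0..1 - \<epsilon>}
            (\<lambda>R. R ^ (n - 2) * integral {0..R}
               (\<lambda>r. (sphere_area n * poisson_kernel n r (cos \<theta>) - 1) / r)))
          \<longlongrightarrow> K_kernel n (cos \<theta>)) (at_right 0)"
proof -
  define t where "t = cos \<theta>"
  have t: "\<bar>t\<bar> \<le> 1" "t < 1"
    using cos_monotone_0_pi[of 0 \<theta>] assms(2,3) by (auto simp: t_def)
  note abel = K_abel_sum_tendsto_poisson_double_integral[OF assms(1) t]
  then have K: "K_kernel n t = - poisson_double_integral n t 1"
    unfolding K_kernel_def by (rule tendsto_Lim[OF trivial_limit_at_left_real])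
  have "(poisson_double_integral n t \<longlongrightarrow> poisson_double_integral n t 1) (at_left 1)"
    by (rule continuous_on_Icc_at_leftD[OF continuous_on_poisson_double_integral[OF assms(1) t]]) simp
  then have "((\<lambda>\<epsilon>. - poisson_double_integral n t (1 - \<epsilon>)) \<longlongrightarrow> - poisson_double_integral n t 1) (at_right 0)"
    unfolding filterlim_at_left_to_right[of _ _ 1] filterlim_at_right_to_0[of _ _ "-1"]
    by (intro tendsto_minus) simp
  with abel show ?thesis
    unfolding t_def[symmetric] K poisson_double_integral_def by simp
qed

end
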